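(* Let $h:\mathbb{R}^p\times[t_0,t_f)\to\mathbb{R}$ be continuously differentiable with $\frac{\partial}{\partial \mathbf{p}}h(\mathbf{p},t)\neq \mathbf{0}$ whenever $h(\mathbf{p},t)=0$. Suppose that at every $(\mathbf{p},t)$ with $\frac{\partial}{\partial \mathbf{p}}h(\mathbf{p},t)=\mathbf{0}$ and $h(\mathbf{p},t)>0$ we have $\frac{\partial h(\mathbf{p},t)}{\partial t}\ge 0$. Then $h$ is a CBF for the system $\dot{\mathbf{p}}=\mathbf{f}(\mathbf{p})+\mathbf{G}(\mathbf{p})\mathbf{z}$, and this holds with an arbitrary choice of the associated extended class-$\mathcal{K}_\infty$ function $\alpha$.
   Context: Agent model (first-order): $\dot{\mathbf{p}}=\mathbf{f}(\mathbf{p})+\mathbf{G}(\mathbf{p})\mathbf{z}$ with state $\mathbf{p}\in\mathbb{R}^p$, input $\mathbf{z}\in\mathbb{R}^z$, $\mathbf{f}:\mathbb{R}^p\to\mathbb{R}^p$ and $\mathbf{G}:\mathbb{R}^p\to\mathbb{R}^{p\times z}$ locally Lipschitz, and $\mathbf{G}(\mathbf{p})$ of full row rank for every $\mathbf{p}$. A continuous $\alpha:\mathbb{R}\to\mathbb{R}$ is an extended class-$\mathcal{K}_\infty$ function if it is strictly increasing, $\alpha(0)=0$, and $\lim_{s\to\pm\infty}\alpha(s)=\pm\infty$. A set-valued flow $\mathcal{D}:[t_0,t_f)\rightrightarrows\mathbb{R}^p$ has graph $\mathcal{G}(\mathcal{D})=\{(\mathbf{p},t):t\in[t_0,t_f),\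 \mathbf{p}\in\mathcal{D}(t)\}$. CBF definition: given a continuously differentiable $h:\mathbb{R}^p\times[t_0,t_f)\to\mathbb{R}$ with $\frac{\partial}{\partial\mathbf{p}}h\neq\mathbf{0}$ whenever $h=0$, let $\mathcal{C}(t)=\{\mathbf{p}:h(\mathbf{p},t)\ge0\}$. Then $h$ is a (zeroing) control barrier function (CBF) for the system if there exist a set-valued flow $\mathcal{D}$ with $\mathcal{C}(t)\subseteq\mathcal{D}(t)$ for all $t$ and an extended class-$\mathcal{K}_\infty$ function $\alpha$ such that for all $(\mathbf{p},t)\in\mathcal{G}(\mathcal{D})$, $\sup_{\mathbf{z}\in\mathbb{R}^z}\dot h(\mathbf{p},t,\mathbf{z})>-\alpha(h(\mathbf{p},t))$, where $\dot h(\mathbf{p},t,\mathbf{z})=\frac{\partial h}{\partial\mathbf{p}}(\mathbf{p},t)\big(\mathbf{f}(\mathbf{p})+\mathbf{G}(\mathbf{p})\mathbf{z}\big)+\frac{\partial h}{\partial t}(\mathbf{p},t)$. *)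

theory Defs
  imports "HOL-Analysis.Analysis" "HOL-Library.Extended_Real"
begin

definition loc_lipschitz :: "('a::metric_space \<Rightarrow> 'b::metric_space) \<Rightarrow> bool" where
  "loc_lipschitz F \<longleftrightarrow> (\<forall>x. \<exists>U L. open U \<and> x \<in> U \<and> L-lipschitz_on U F)"

definition ext_class_Kinf :: "(real \<Rightarrow> real) \<Rightarrow> bool" where
  "ext_class_Kinf a \<longleftrightarrow> continuous_on UNIV a \<and> strict_mono a \<and> a 0 = 0
     \<and> filterlim a at_top at_top \<and> filterlim a at_bot at_bot"

definition time_dom :: "real \<Rightarrow> ereal \<Rightarrow> real set" where
  "time_dom t0 tf = {t. t0 \<le> t \<and> ereal t < tf}"

text \<open>h is continuously differentiable on R^p x [t0,tf) (jointly in (p,t), one-sided at t0),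
  with partial gradient in p given by Dp and partial time derivative given by Dt
  (these are uniquely determined by h since t0 < tf).\<close>
definition C1_with_partials ::
  "(real^'p \<Rightarrow> real \<Rightarrow> real) \<Rightarrow> (real^'p \<Rightarrow> real \<Rightarrow> real^'p) \<Rightarrow> (real^'p \<Rightarrow> real \<Rightarrow> real)
   \<Rightarrow> real set \<Rightarrow> bool" where
  "C1_with_partials h Dp Dt T \<longleftrightarrow>
     continuous_on (UNIV \<times> T) (\<lambda>(x,t). Dp x t) \<and>
     continuous_on (UNIV \<times> T) (\<lambda>(x,t). Dt x t) \<and>
     (\<forall>x. \<forall>t\<in>T. ((\<lambda>(y,s). h y s) has_derivative (\<lambda>(dy,ds). Dp x t \<bullet> dy + Dt x t * ds))
                      (at (x,t) within UNIV \<times> T))"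

definition hdot ::
  "(real^'p \<Rightarrow> real^'p) \<Rightarrow> (real^'p \<Rightarrow> real^'z^'p) \<Rightarrow> (real^'p \<Rightarrow> real \<Rightarrow> real^'p)
   \<Rightarrow> (real^'p \<Rightarrow> real \<Rightarrow> real) \<Rightarrow> real^'p \<Rightarrow> real \<Rightarrow> real^'z \<Rightarrow> real" where
  "hdot f G Dp Dt x t z = Dp x t \<bullet> (f x + G x *v z) + Dt x t"

definition safe_set :: "(real^'p \<Rightarrow> real \<Rightarrow> real) \<Rightarrow> real \<Rightarrow> (real^'p) set" where
  "safe_set h t = {x. h x t \<ge> 0}"

definition CBF_cond_with ::
  "(real^'p \<Rightarrow> real^'p) \<Rightarrow> (real^'p \<Rightarrow> real^'z^'p) \<Rightarrow> (real^'p \<Rightarrow> real \<Rightarrow> real)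
   \<Rightarrow> (real^'p \<Rightarrow> real \<Rightarrow> real^'p) \<Rightarrow> (real^'p \<Rightarrow> real \<Rightarrow> real) \<Rightarrow> real set
   \<Rightarrow> (real \<Rightarrow> real) \<Rightarrow> bool" where
  "CBF_cond_with f G h Dp Dt T alpha \<longleftrightarrow>
     (\<exists>D :: real \<Rightarrow> (real^'p) set.
        (\<forall>t\<in>T. safe_set h t \<subseteq> D t) \<and>
        (\<forall>t\<in>T. \<forall>x\<in>D t. (SUP z. ereal (hdot f G Dp Dt x t z)) > ereal (- alpha (h x t))))"

definition is_CBF ::
  "(real^'p \<Rightarrow> real^'p) \<Rightarrow> (real^'p \<Rightarrow> real^'z^'p) \<Rightarrow> (real^'p \<Rightarrow> real \<Rightarrow> real)
   \<Rightarrow> (real^'p \<Rightarrow> real \<Rightarrow> real^'p) \<Rightarrow> (real^'p \<Rightarrow> real \<Rightarrow> real) \<Rightarrow> real set \<Rightarrow> bool" where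
  "is_CBF f G h Dp Dt T \<longleftrightarrow>
     C1_with_partials h Dp Dt T \<and>
     (\<forall>x. \<forall>t\<in>T. h x t = 0 \<longrightarrow> Dp x t \<noteq> 0) \<and>
     (\<exists>alpha. ext_class_Kinf alpha \<and> CBF_cond_with f G h Dp Dt T alpha)"

end

theory Submission
  imports Defs
begin

text \<open>Take the flow \<open>D(t)\<close> to be the safe set \<open>C(t)\<close> itself. At a point of \<open>C(t)\<close> where
  \<open>\<partial>h/\<partial>p \<noteq> 0\<close>, the rate \<open>\<dot>h\<close> is an affine function of the input whose linear part
  \<open>z \<mapsto> \<partial>h/\<partial>p \<cdot> G z\<close> is onto, because \<open>G\<close> has full row rank; so the supremum over inputs
  is \<open>+\<infinity>\<close>. Where \<open>\<partial>h/\<partial>p = 0\<close>, the point cannot lie on the boundary \<open>h = 0\<close>, so \<open>h > 0\<close> and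
  \<open>-\<alpha>(h) < 0 \<le> \<partial>h/\<partial>t = \<dot>h\<close>. Neither the regularity of \<open>f\<close> and \<open>G\<close> nor
  the choice of \<open>\<alpha>\<close> plays a role.\<close>

lemma ext_class_Kinf_id: "ext_class_Kinf (\<lambda>s. s)"
  unfolding ext_class_Kinf_def
  by (auto simp: strict_mono_def filterlim_ident continuous_on_id)

lemma ext_class_Kinf_pos:
  assumes "ext_class_Kinf a" and "0 < s"
  shows "0 < a s"
  using assms strict_mono_less[of a 0 s] by (simp add: ext_class_Kinf_def)

lemma hdot_grad_zero:
  assumes "Dp x t = 0"
  shows "hdot f G Dp Dt x t z = Dt x t"
  using assms by (simp add: hdot_def)

lemma surj_hdot:
  assumes "surj ((*v) (G x))" and "Dp x t \<noteq> 0"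
  shows "surj (hdot f G Dp Dt x t)"
  unfolding surj_def
proof
  fix r :: real
  define d where "d = Dp x t"
  define c where "c = (r - d \<bullet> f x - Dt x t) / (d \<bullet> d)"
  obtain z where z: "G x *v z = c *\<^sub>R d"
    using assms(1) by (metis surjD)
  have "d \<bullet> d \<noteq> 0"
    using assms(2) by (simp add: d_def)
  then have "hdot f G Dp Dt x t z = r"
    unfolding hdot_def z d_def[symmetric] by (simp add: inner_add_right c_def field_simps)
  then show "\<exists>z. r = hdot f G Dp Dt x t z"
    by metis
qed

lemma SUP_hdot_eq_PInfty:
  assumes "surj ((*v) (G x))" and "Dp x t \<noteq> 0"
  shows "(SUP z. ereal (hdot f G Dp Dt x t z)) = \<infinity>"
proof (rule SUP_PInfty)
  fix n :: nat
  obtain z where "hdot f G Dp Dt x t z = real n"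
    using surj_hdot[of G x Dp t f Dt, OF assms] by (metis surjD)
  then show "\<exists>z\<in>UNIV. ereal (real n) \<le> ereal (hdot f G Dp Dt x t z)"
    by (metis UNIV_I order_refl)
qed

lemma CBF_cond_with_safe_set:
  assumes surj_G: "\<forall>x. surj ((*v) (G x))"
    and grad_nonzero: "\<forall>x. \<forall>t\<in>T. h x t = 0 \<longrightarrow> Dp x t \<noteq> 0"
    and Dt_nonneg: "\<forall>x. \<forall>t\<in>T. Dp x t = 0 \<and> h x t > 0 \<longrightarrow> Dt x t \<ge> 0"
    and alpha: "ext_class_Kinf alpha"
  shows "CBF_cond_with f G h Dp Dt T alpha"
  unfolding CBF_cond_with_def
proof (intro exI[of _ "safe_set h"] conjI ballI)
  fix t x
  assume t: "t \<in> T" and "x \<in> safe_set h t"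
  then have h_nonneg: "h x t \<ge> 0"
    by (simp add: safe_set_def)
  show "ereal (- alpha (h x t)) < (SUP z. ereal (hdot f G Dp Dt x t z))"
  proof (cases "Dp x t = 0")
    case True
    with grad_nonzero t h_nonneg have h_pos: "h x t > 0"
      by force
    with True Dt_nonneg t have "- alpha (h x t) < hdot f G Dp Dt x t 0"
      using ext_class_Kinf_pos[OF alpha h_pos] hdot_grad_zero[of Dp x t f G Dt 0, OF True] by force
    also have "ereal \<dots> \<le> (SUP z. ereal (hdot f G Dp Dt x t z))"
      by (rule SUP_upper) simp
    finally show ?thesis
      by simp
  next
    case False
    then show ?thesis
      using SUP_hdot_eq_PInfty[of G x Dp t f Dt] surj_G by simp
  qed
qed simp

theorem mainTheorem1:
  fixes f :: "real^'p \<Rightarrow> real^'p"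
    and G :: "real^'p \<Rightarrow> real^'z^'p"
    and h :: "real^'p \<Rightarrow> real \<Rightarrow> real"
    and Dp :: "real^'p \<Rightarrow> real \<Rightarrow> real^'p"
    and Dt :: "real^'p \<Rightarrow> real \<Rightarrow> real"
    and t0 :: real and tf :: ereal
  assumes "ereal t0 < tf"
    and "loc_lipschitz f" and "loc_lipschitz G"
    and "\<forall>x. rank (G x) = CARD('p)"
    and "C1_with_partials h Dp Dt (time_dom t0 tf)"
    and "\<forall>x. \<forall>t\<in>time_dom t0 tf. h x t = 0 \<longrightarrow> Dp x t \<noteq> 0"
    and "\<forall>x. \<forall>t\<in>time_dom t0 tf. Dp x t = 0 \<and> h x t > 0 \<longrightarrow> Dt x t \<ge> 0"
  shows "is_CBF f G h Dp Dt (time_dom t0 tf) \<and>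
         (\<forall>alpha. ext_class_Kinf alpha \<longrightarrow> CBF_cond_with f G h Dp Dt (time_dom t0 tf) alpha)"
proof -
  have "\<forall>x. surj ((*v) (G x))"
    using assms(4) full_rank_surjective by blast
  then have every_alpha:
    "\<forall>alpha. ext_class_Kinf alpha \<longrightarrow> CBF_cond_with f G h Dp Dt (time_dom t0 tf) alpha"
    using CBF_cond_with_safe_set assms(6,7) by blast
  then show ?thesis
    unfolding is_CBF_def using ext_class_Kinf_id assms(5,6) by blast
qed

end
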